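(* Let $k\ge1$ and $s$ be integers with $0\le s\le 2k-1$, and let $\chi=1$ if $s$ is odd and $\chi=0$ if $s$ is even. Then $$\det\Big(C_{2j}^{(2k-1)}(2i+\chi\to s)\Big)_{0\le i,j\le k-1}=\begin{cases}0,&\text{if }\gcd(s+1,2k+1)\ne1,\\ (-1)^{\sum_{i=1}^k\lfloor\frac{i(s+1)}{2k+1}\rfloor},&\text{if }\gcd(s+1,2k+1)=1.\end{cases}$$
   Context: $C_N^{(K)}(r\to s)$ is the number of lattice paths with steps $(1,1),(1,-1)$ from $(0,r)$ to $(N,s)$ never going below the $x$-axis nor above the line $y=K$. *)

theory Defs
  imports "Jordan_Normal_Form.Determinant"
begin

text \<open>A lattice path with N steps is a list of N steps, True = (1,1), False = (1,-1).
  Height after a prefix of the steps, starting at height r.\<close>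

definition path_height :: "int \<Rightarrow> bool list \<Rightarrow> int" where
  "path_height r ss = r + (\<Sum>b\<leftarrow>ss. if b then 1 else -1)"

definition strip_paths :: "nat \<Rightarrow> nat \<Rightarrow> int \<Rightarrow> int \<Rightarrow> bool list set" where
  "strip_paths K N r s = {ss. length ss = N \<and> path_height r ss = s \<and>
      (\<forall>m\<le>N. 0 \<le> path_height r (take m ss) \<and> path_height r (take m ss) \<le> int K)}"

definition C :: "nat \<Rightarrow> nat \<Rightarrow> int \<Rightarrow> int \<Rightarrow> nat" where
  "C K N r s = card (strip_paths K N r s)"

end

theory Submission
  imports Defs "HOL-Number_Theory.Cong"
begin

text \<open>
  By the reflection principle, a strip count \<open>C\<^sub>N\<^sup>(\<^sup>K\<^sup>)(r \<rightarrow> s)\<close> is the value at \<open>r + 1\<close> of the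
  \<open>N\<close>-fold neighbour-sum of the antisymmetric, \<open>2(K + 2)\<close>-periodic delta at \<open>s + 1\<close>.  For
  \<open>K = 2k - 1\<close> the period is \<open>2n\<close> with \<open>n = 2k + 1\<close>, and after an upper unitriangular change
  of columns the matrix has entries \<open>\<delta>(p + 2u) + \<delta>(p - 2u)\<close>.

  If \<open>s + 1\<close> is invertible modulo \<open>n\<close>, multiplying by its inverse turns these deltas into
  congruences modulo \<open>n\<close>: the matrix factors as a signed permutation matrix, a unitriangular
  matrix and a matrix of determinant \<open>sign \<Phi>\<close>, where \<open>\<Phi>\<close> permutes the classes \<open>\<plusminus>x\<close> modulo
  \<open>n\<close> by multiplication.  The signs of the residues \<open>x(s + 1)\<close> (Gauss's lemma) produce the
  floor sum, and the two signs of \<open>\<Phi>\<close> cancel.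

  If \<open>d = gcd(s + 1, n) > 1\<close>, an odd \<open>d\<close>-periodic function is orthogonal to every column:
  the neighbour-sum is self-adjoint on \<open>[0, n]\<close> and preserves such functions, which vanish at
  the starting point \<open>s + 1\<close>.  It is nonzero on the rows, so the determinant vanishes.
\<close>

section \<open>Lattice paths in a strip\<close>

lemma path_height_Cons: "path_height r (b # ss) = path_height (r + (if b then 1 else -1)) ss"
  unfolding path_height_def by simp

lemma path_height_Nil [simp]: "path_height r [] = r"
  unfolding path_height_def by simp

lemma finite_strip_paths: "finite (strip_paths K N r s)"
proof -
  have "strip_paths K N r s \<subseteq> {xs. set xs \<subseteq> (UNIV::bool set) \<and> length xs = N}"
    unfolding strip_paths_def by auto
  moreover have "finite {xs. set xs \<subseteq> (UNIV::bool set) \<and> length xs = N}"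
    by (rule finite_lists_length_eq) simp
  ultimately show ?thesis by (rule finite_subset)
qed

lemma C_outside: assumes "r < 0 \<or> r > int K" shows "C K N r s = 0"
proof -
  have "strip_paths K N r s = {}"
    using assms unfolding strip_paths_def by (auto dest: spec[of _ 0])
  thus ?thesis unfolding C_def by simp
qed

lemma C_0: "C K 0 r s = (if r = s \<and> 0 \<le> r \<and> r \<le> int K then 1 else 0)"
proof -
  have "strip_paths K 0 r s = (if r = s \<and> 0 \<le> r \<and> r \<le> int K then {[]} else {})"
    unfolding strip_paths_def by auto
  thus ?thesis unfolding C_def by simp
qed

lemma Cons_mem_strip_paths_iff:
  assumes "0 \<le> r" "r \<le> int K"
  shows "b # ss \<in> strip_paths K (Suc N) r s
    \<longleftrightarrow> ss \<in> strip_paths K N (r + (if b then 1 else -1)) s"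
proof -
  have "(\<forall>m\<le>Suc N. 0 \<le> path_height r (take m (b # ss)) \<and> path_height r (take m (b # ss)) \<le> int K)
    \<longleftrightarrow> (\<forall>m\<le>N. 0 \<le> path_height (r + (if b then 1 else -1)) (take m ss)
               \<and> path_height (r + (if b then 1 else -1)) (take m ss) \<le> int K)"
    (is "?L \<longleftrightarrow> ?R")
  proof
    assume ?L
    show ?R
    proof (intro allI impI)
      fix m assume "m \<le> N"
      with \<open>?L\<close> show "0 \<le> path_height (r + (if b then 1 else -1)) (take m ss)
          \<and> path_height (r + (if b then 1 else -1)) (take m ss) \<le> int K"
        by (auto simp: path_height_Cons dest: spec[of _ "Suc m"])
    qed
  next
    assume ?R
    show ?L
    proof (intro allI impI)
      fix m assume "m \<le> Suc N"
      with \<open>?R\<close> assms show "0 \<le> path_height r (take m (b # ss)) \<and> path_height r (take m (b # ss)) \<le> int K"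
        by (cases m) (auto simp: path_height_Cons)
    qed
  qed
  thus ?thesis unfolding strip_paths_def by (simp add: path_height_Cons)
qed

lemma strip_paths_Suc:
  assumes "0 \<le> r" "r \<le> int K"
  shows "strip_paths K (Suc N) r s
    = Cons True ` strip_paths K N (r + 1) s \<union> Cons False ` strip_paths K N (r - 1) s"
proof (intro equalityI subsetI)
  fix ss assume ss: "ss \<in> strip_paths K (Suc N) r s"
  then obtain b ss' where "ss = b # ss'" unfolding strip_paths_def by (cases ss) auto
  with ss Cons_mem_strip_paths_iff[OF assms] show "ss \<in> Cons True ` strip_paths K N (r + 1) s
      \<union> Cons False ` strip_paths K N (r - 1) s"
    by (cases b) auto
qed (use Cons_mem_strip_paths_iff[OF assms] in auto)

lemma C_Suc: assumes "0 \<le> r" "r \<le> int K"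
  shows "C K (Suc N) r s = C K N (r + 1) s + C K N (r - 1) s"
  unfolding C_def strip_paths_Suc[OF assms]
  by (subst card_Un_disjoint) (auto simp: finite_strip_paths card_image)

section \<open>The reflection principle\<close>

definition refl_delta :: "int \<Rightarrow> int \<Rightarrow> int \<Rightarrow> int" where
  "refl_delta P m p = of_bool ([p = m] (mod P)) - of_bool ([p = -m] (mod P))"

fun refl_walks :: "int \<Rightarrow> int \<Rightarrow> nat \<Rightarrow> int \<Rightarrow> int" where
  "refl_walks P m 0 p = refl_delta P m p"
| "refl_walks P m (Suc j) p = refl_walks P m j (p + 1) + refl_walks P m j (p - 1)"

lemma refl_delta_uminus: "refl_delta P m (-p) = - refl_delta P m p"
  using cong_minus_minus_iff[of p m P] cong_minus_minus_iff[of p "-m" P]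
  by (simp add: refl_delta_def)

lemma refl_delta_eq_of_bool:
  assumes "0 \<le> p" "0 < m" "p + m < P"
  shows "refl_delta P m p = of_bool (p = m)"
proof -
  have "\<not> [p = -m] (mod P)"
  proof
    assume "[p = -m] (mod P)"
    hence "P dvd p + m" by (simp add: cong_iff_dvd_diff)
    with assms show False using zdvd_imp_le[of P "p + m"] by simp
  qed
  moreover have "[p = m] (mod P) \<longleftrightarrow> p = m"
    using assms by (auto simp: cong_def)
  ultimately show ?thesis by (simp add: refl_delta_def)
qed

lemma refl_walks_uminus: "refl_walks P m j (-p) = - refl_walks P m j p"
proof (induction j arbitrary: p)
  case 0 thus ?case by (simp add: refl_delta_uminus)
next
  case (Suc j)
  have "refl_walks P m (Suc j) (-p) = refl_walks P m j (-(p - 1)) + refl_walks P m j (-(p + 1))"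
    by simp
  also have "\<dots> = - refl_walks P m (Suc j) p" using Suc[of "p - 1"] Suc[of "p + 1"] by simp
  finally show ?case .
qed

lemma refl_walks_periodic: "refl_walks P m j (p + P) = refl_walks P m j p"
proof (induction j arbitrary: p)
  case 0 thus ?case by (simp add: refl_delta_def cong_def)
next
  case (Suc j)
  have "refl_walks P m (Suc j) (p + P) = refl_walks P m j ((p + 1) + P) + refl_walks P m j ((p - 1) + P)"
    by (simp add: algebra_simps)
  thus ?case using Suc by simp
qed

lemma refl_walks_at_0: "refl_walks P m j 0 = 0"
  using refl_walks_uminus[of P m j 0] by simp

lemma refl_walks_at_half: assumes "P = 2 * q" shows "refl_walks P m j q = 0"
proof -
  have "refl_walks P m j q = refl_walks P m j (-q + P)" using assms by simp
  also have "\<dots> = refl_walks P m j (-q)" by (rule refl_walks_periodic)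
  also have "\<dots> = - refl_walks P m j q" by (rule refl_walks_uminus)
  finally show ?thesis by simp
qed

lemma refl_walks_parity: "even P \<Longrightarrow> odd (p + int N + m) \<Longrightarrow> refl_walks P m N p = 0"
proof (induction N arbitrary: p)
  case 0
  have "\<not> [p = m] (mod P)" "\<not> [p = -m] (mod P)"
    using 0 dvd_trans[of 2 P "p - m"] dvd_trans[of 2 P "p + m"] by (auto simp: cong_iff_dvd_diff)
  thus ?case by (simp add: refl_delta_def)
next
  case (Suc N)
  have "odd (p + 1 + int N + m)" "odd (p - 1 + int N + m)"
    using Suc.prems(2) by presburger+
  thus ?case using Suc.IH[OF Suc.prems(1)] by simp
qed

theorem C_eq_refl_walks:
  fixes r s :: int
  assumes "0 \<le> s" "s \<le> int K" "-1 \<le> r" "r \<le> int K + 1"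
  shows "int (C K N r s) = refl_walks (2 * (int K + 2)) (s + 1) N (r + 1)"
  using assms(3,4)
proof (induction N arbitrary: r)
  case 0
  have "refl_delta (2 * (int K + 2)) (s + 1) (r + 1) = of_bool (r = s)"
    using 0 assms(1,2) by (subst refl_delta_eq_of_bool) auto
  thus ?case using 0 assms(1,2) by (auto simp: C_0)
next
  case (Suc N)
  consider "r = -1" | "r = int K + 1" | "0 \<le> r" "r \<le> int K" using Suc.prems by linarith
  thus ?case
  proof cases
    case 1 thus ?thesis by (simp add: C_outside refl_walks_at_0 del: refl_walks.simps)
  next
    case 2
    hence "r + 1 = int K + 2" by simp
    hence "refl_walks (2 * (int K + 2)) (s + 1) (Suc N) (r + 1) = 0"
      by (simp only:) (rule refl_walks_at_half, simp)
    thus ?thesis using 2 by (simp add: C_outside)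
  next
    case 3 thus ?thesis using Suc.IH by (simp add: C_Suc)
  qed
qed

section \<open>Permutations and determinants\<close>

definition rev_perm :: "nat \<Rightarrow> nat \<Rightarrow> nat" where
  "rev_perm k i = (if i < k then k - 1 - i else i)"

lemma rev_perm_permutes: "rev_perm k permutes {0..<k}"
  by (rule inj_imp_permutes) (auto simp: rev_perm_def inj_on_def)

lemma sign_rev_perm: "sign (rev_perm k) = (-1) ^ (\<Sum>x<k. x)"
proof (induction k rule: less_induct)
  case (less k)
  consider "k = 0" | "k = 1" | k' where "k = Suc (Suc k')" by (metis One_nat_def not0_implies_Suc)
  thus ?case
  proof cases
    case 3
    have bj: "bij_betw Suc {0..<k'} {1..k'}" by (rule bij_betw_byWitness[where f'="\<lambda>x. x - 1"]) auto
    define c where "c = (\<lambda>x. if x \<in> {1..k'} then Suc (rev_perm k' (x - 1)) else x)"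
    interpret pb: permutes_bij_finite "rev_perm k'" "{0..<k'}" "{1..k'}" Suc "\<lambda>x. x - 1" c
      by (unfold_locales; (rule reflexive)?)
        (simp_all add: rev_perm_permutes bj atLeastLessThanSuc_atLeastAtMost c_def)
    have "rev_perm k = c \<circ> Transposition.transpose 0 (Suc k')"
      by (rule ext) (auto simp: rev_perm_def c_def 3 transpose_def)
    hence "sign (rev_perm k) = sign c * sign (Transposition.transpose 0 (Suc k'))"
      using sign_compose[OF permutes_imp_permutation[OF _ pb.permutes_p'] permutation_swap_id] by simp
    also have "\<dots> = - ((-1) ^ (\<Sum>x<k'. x))" using less.IH[of k'] 3 by (simp add: pb.sign_p' sign_swap_id)
    also have "\<dots> = (-1) ^ (\<Sum>x<k. x)"
    proof -
      have "(\<Sum>x<k. x) = (\<Sum>x<k'. x) + 2 * k' + 1" using 3 by simp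
      thus ?thesis by (simp add: power_add)
    qed
    finally show ?thesis .
  next
    case 1
    hence "rev_perm k = id" by (auto simp: rev_perm_def)
    thus ?thesis using 1 by simp
  next
    case 2
    hence "rev_perm k = id" by (auto simp: rev_perm_def)
    thus ?thesis using 2 by simp
  qed
qed

lemma det_upper_unitriangular:
  assumes "\<And>i j. j < i \<Longrightarrow> i < k \<Longrightarrow> f i j = 0" "\<And>i. i < k \<Longrightarrow> f i i = 1"
  shows "det (mat k k (\<lambda>(i, j). f i j)) = (1 :: 'a :: comm_ring_1)"
proof -
  have "det (mat k k (\<lambda>(i, j). f i j)) = prod_list (diag_mat (mat k k (\<lambda>(i, j). f i j)))"
    by (rule det_upper_triangular[of _ k]) (auto simp: upper_triangular_def assms)
  also have "\<dots> = 1" unfolding prod_list_diag_prod using assms by simp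
  finally show ?thesis .
qed

lemma det_unique_perm:
  fixes A :: "'a :: idom mat"
  assumes A: "A \<in> carrier_mat n n" and q: "q permutes {0..<n}"
    and uniq: "\<And>p. p permutes {0..<n} \<Longrightarrow> (\<forall>i<n. A $$ (i, p i) \<noteq> 0) \<Longrightarrow> p = q"
  shows "det A = signof q * (\<Prod>i=0..<n. A $$ (i, q i))"
proof -
  let ?PU = "{p. p permutes {0..<n}}"
  let ?pp = "\<lambda>p. signof p * (\<Prod>i=0..<n. A $$ (i, p i))"
  have "(\<Sum>p\<in>?PU - {q}. ?pp p) = 0"
  proof (rule sum.neutral, rule ballI)
    fix p assume "p \<in> ?PU - {q}"
    with uniq obtain i where "i < n" "A $$ (i, p i) = 0" by blast
    thus "?pp p = 0" by (subst prod_zero) auto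
  qed
  moreover have "det A = ?pp q + (\<Sum>p\<in>?PU - {q}. ?pp p)"
    unfolding det_def'[OF A] by (rule sum.remove) (use finite_permutations q in auto)
  ultimately show ?thesis by simp
qed

lemma det_eq_0_if_left_kernel:
  fixes A :: "'a :: idom mat"
  assumes "A \<in> carrier_mat n n" "v \<in> carrier_vec n" "v \<noteq> 0\<^sub>v n" "transpose_mat A *\<^sub>v v = 0\<^sub>v n"
  shows "det A = 0"
proof -
  have "det (transpose_mat A) = 0"
    using assms det_0_iff_vec_prod_zero[of "transpose_mat A" n] by auto
  thus ?thesis using det_transpose[OF assms(1)] by simp
qed

section \<open>Two steps at a time\<close>

definition sym_delta :: "int \<Rightarrow> int \<Rightarrow> nat \<Rightarrow> int \<Rightarrow> int" where
  "sym_delta P m u p = (if u = 0 then refl_delta P m p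
     else refl_delta P m (p + 2 * int u) + refl_delta P m (p - 2 * int u))"

text \<open>\<open>walk_coeff j u\<close> is the binomial coefficient \<open>(2j choose j - u)\<close>.\<close>

fun walk_coeff :: "nat \<Rightarrow> nat \<Rightarrow> int" where
  "walk_coeff 0 u = (if u = 0 then 1 else 0)"
| "walk_coeff (Suc j) u = 2 * walk_coeff j u
     + (if u = 0 then 2 * walk_coeff j 1 else walk_coeff j (u - 1) + walk_coeff j (u + 1))"

lemma walk_coeff_eq_0: "j < u \<Longrightarrow> walk_coeff j u = 0"
  by (induction j arbitrary: u) auto

lemma walk_coeff_diag: "walk_coeff j j = 1"
  by (induction j) (auto simp: walk_coeff_eq_0)

lemma refl_walks_Suc_Suc:
  "refl_walks P m (Suc (Suc j)) p = refl_walks P m j (p + 2) + 2 * refl_walks P m j p + refl_walks P m j (p - 2)"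
proof -
  have "p + 1 + 1 = p + 2" "p - 1 - 1 = p - 2" "p + 1 - 1 = p" "p - 1 + 1 = p" by simp_all
  thus ?thesis by (simp only: refl_walks.simps)
qed

lemma sym_delta_shift_sum:
  "sym_delta P m u (p + 2) + sym_delta P m u (p - 2) = sym_delta P m (Suc u) p
     + (if u = 0 then 0 else sym_delta P m (u - 1) p) + (if u = 1 then sym_delta P m 0 p else 0)"
proof -
  consider "u = 0" | "u = 1" | "u \<ge> 2" by linarith
  thus ?thesis
  proof cases
    case 3
    hence "int (u - 1) = int u - 1" by simp
    thus ?thesis using 3 by (simp add: sym_delta_def algebra_simps)
  qed (simp_all add: sym_delta_def algebra_simps)
qed

lemma sum_lessThan_shift_up:
  fixes f E :: "nat \<Rightarrow> 'a::semiring_0"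
  assumes "f L = 0"
  shows "(\<Sum>u<Suc L. f u * E (Suc u)) = (\<Sum>u<Suc L. (if u = 0 then 0 else f (u - 1)) * E u)"
  using assms by (subst (2) sum.lessThan_Suc_shift) simp

lemma sum_lessThan_shift_down:
  fixes f E :: "nat \<Rightarrow> 'a::semiring_0"
  assumes "f (Suc L) = 0"
  shows "(\<Sum>u<Suc L. (if u = 0 then 0 else f u * E (u - 1))) = (\<Sum>u<Suc L. f (Suc u) * E u)"
  using assms by (subst sum.lessThan_Suc_shift) simp

lemma sum_walk_coeff_step:
  assumes "Suc j < L"
  shows "(\<Sum>u<L. walk_coeff j u * (sym_delta P m u (p + 2) + 2 * sym_delta P m u p + sym_delta P m u (p - 2)))
    = (\<Sum>u<L. walk_coeff (Suc j) u * sym_delta P m u p)"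
proof -
  obtain L' where L: "L = Suc L'" using assms by (cases L) auto
  have jL: "walk_coeff j L' = 0" "walk_coeff j (Suc L') = 0" using assms L by (auto simp: walk_coeff_eq_0)
  let ?E = "\<lambda>u. sym_delta P m u p"
  have "(\<Sum>u<L. walk_coeff j u * (sym_delta P m u (p + 2) + 2 * ?E u + sym_delta P m u (p - 2)))
      = (\<Sum>u<L. walk_coeff j u * ?E (Suc u)) + (\<Sum>u<L. (if u = 0 then 0 else walk_coeff j u * ?E (u - 1)))
        + (\<Sum>u<L. (if u = 1 then walk_coeff j 1 * ?E 0 else 0)) + (\<Sum>u<L. 2 * walk_coeff j u * ?E u)"
  proof -
    have "walk_coeff j u * (sym_delta P m u (p + 2) + 2 * ?E u + sym_delta P m u (p - 2))
      = walk_coeff j u * ?E (Suc u) + (if u = 0 then 0 else walk_coeff j u * ?E (u - 1))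
        + (if u = 1 then walk_coeff j 1 * ?E 0 else 0) + 2 * walk_coeff j u * ?E u" for u
      using sym_delta_shift_sum[of P m u p] by (auto simp: algebra_simps)
    thus ?thesis by (simp only: sum.distrib)
  qed
  also have "(\<Sum>u<L. walk_coeff j u * ?E (Suc u)) = (\<Sum>u<L. (if u = 0 then 0 else walk_coeff j (u - 1)) * ?E u)"
    unfolding L by (rule sum_lessThan_shift_up) (rule jL)
  also have "(\<Sum>u<L. (if u = 0 then 0 else walk_coeff j u * ?E (u - 1))) = (\<Sum>u<L. walk_coeff j (Suc u) * ?E u)"
    unfolding L by (rule sum_lessThan_shift_down) (rule jL)
  also have "(\<Sum>u<L. (if u = 1 then walk_coeff j 1 * ?E 0 else 0)) = (\<Sum>u<L. if u = 0 then walk_coeff j 1 * ?E u else 0)"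
    using assms by (simp add: sum.delta)
  finally show ?thesis
    by (simp only: sum.distrib[symmetric]) (intro sum.cong refl, auto simp: algebra_simps)
qed

lemma refl_walks_even_expansion:
  "j < L \<Longrightarrow> refl_walks P m (2 * j) p = (\<Sum>u<L. walk_coeff j u * sym_delta P m u p)"
proof (induction j arbitrary: p)
  case 0
  have "(\<Sum>u<L. walk_coeff 0 u * sym_delta P m u p) = (\<Sum>u\<in>{0}. walk_coeff 0 u * sym_delta P m u p)"
    using 0 by (intro sum.mono_neutral_right) auto
  thus ?case by (simp add: sym_delta_def)
next
  case (Suc j)
  have "refl_walks P m (2 * Suc j) p
      = refl_walks P m (2 * j) (p + 2) + 2 * refl_walks P m (2 * j) p + refl_walks P m (2 * j) (p - 2)"
    using refl_walks_Suc_Suc[of P m "2 * j" p] by (simp add: numeral_2_eq_2)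
  also have "\<dots> = (\<Sum>u<L. walk_coeff j u
      * (sym_delta P m u (p + 2) + 2 * sym_delta P m u p + sym_delta P m u (p - 2)))"
    using Suc by (simp add: sum.distrib sum_distrib_left algebra_simps)
  also have "\<dots> = (\<Sum>u<L. walk_coeff (Suc j) u * sym_delta P m u p)"
    by (rule sum_walk_coeff_step) (rule Suc.prems)
  finally show ?case .
qed

lemma det_refl_walks_mat_eq_det_sym_delta_mat:
  "det (mat k k (\<lambda>(i, j). refl_walks P m (2 * j) (p i))) = det (mat k k (\<lambda>(i, u). sym_delta P m u (p i)))"
proof -
  let ?E = "mat k k (\<lambda>(i, u). sym_delta P m u (p i))"
  let ?U = "mat k k (\<lambda>(u, j). walk_coeff j u)"
  have "mat k k (\<lambda>(i, j). refl_walks P m (2 * j) (p i)) = ?E * ?U"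
  proof (rule eq_matI)
    fix i j assume "i < dim_row (?E * ?U)" "j < dim_col (?E * ?U)"
    hence i: "i < k" and j: "j < k" by auto
    have "refl_walks P m (2 * j) (p i) = (\<Sum>u<k. walk_coeff j u * sym_delta P m u (p i))"
      by (rule refl_walks_even_expansion[OF j])
    thus "mat k k (\<lambda>(i, j). refl_walks P m (2 * j) (p i)) $$ (i, j) = (?E * ?U) $$ (i, j)"
      using i j by (simp add: scalar_prod_def atLeast0LessThan mult.commute)
  qed auto
  hence "det (mat k k (\<lambda>(i, j). refl_walks P m (2 * j) (p i))) = det ?E * det ?U"
    by (simp add: det_mult[of _ k])
  also have "det ?U = 1" by (rule det_upper_unitriangular) (auto simp: walk_coeff_eq_0 walk_coeff_diag)
  finally show ?thesis by simp
qed

section \<open>Residues modulo an odd number\<close>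

locale odd_modulus =
  fixes k :: nat
begin

abbreviation n :: int where "n \<equiv> 2 * int k + 1"

text \<open>Every \<open>x\<close> is congruent to \<open>res_sgn x * res_abs x\<close> with \<open>0 \<le> res_abs x \<le> k\<close>.\<close>

definition res_abs :: "int \<Rightarrow> nat" where
  "res_abs x = (if x mod n \<le> int k then nat (x mod n) else nat (n - x mod n))"

definition res_sgn :: "int \<Rightarrow> int" where
  "res_sgn x = (if x mod n = 0 then 0 else if x mod n \<le> int k then 1 else -1)"

lemma n_pos: "n > 0" by simp

lemma res_abs_le: "res_abs x \<le> k"
proof -
  have "0 \<le> x mod n" "x mod n < n" by (rule pos_mod_sign[OF n_pos], rule pos_mod_bound[OF n_pos])
  thus ?thesis unfolding res_abs_def by auto
qed

lemma res_abs_sgn_cong: "[x = y] (mod n) \<Longrightarrow> res_abs x = res_abs y \<and> res_sgn x = res_sgn y"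
  unfolding cong_def res_abs_def res_sgn_def by simp

lemma neg_mod_n: "(-x) mod n = (if x mod n = 0 then 0 else n - x mod n)"
  using zmod_zminus1_eq_if[of x n] by (auto simp: mod_eq_0_iff_dvd)

lemma res_abs_uminus: "res_abs (-x) = res_abs x" and res_sgn_uminus: "res_sgn (-x) = - res_sgn x"
proof -
  have r: "0 \<le> x mod n" "x mod n < n" by (rule pos_mod_sign[OF n_pos], rule pos_mod_bound[OF n_pos])
  show "res_abs (-x) = res_abs x" unfolding res_abs_def neg_mod_n using r by auto
  show "res_sgn (-x) = - res_sgn x" unfolding res_sgn_def neg_mod_n using r by auto
qed

lemma res_sgn_abs_cong: "[x = res_sgn x * int (res_abs x)] (mod n)"
proof -
  have r: "0 \<le> x mod n" "x mod n < n" by (rule pos_mod_sign[OF n_pos], rule pos_mod_bound[OF n_pos])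
  consider "x mod n = 0" | "x mod n \<noteq> 0" "x mod n \<le> int k" | "x mod n > int k" by linarith
  thus ?thesis
  proof cases
    case 1 thus ?thesis unfolding res_sgn_def res_abs_def cong_def by simp
  next
    case 2 thus ?thesis unfolding res_sgn_def res_abs_def cong_def using r by simp
  next
    case 3
    hence "res_sgn x * int (res_abs x) = x mod n - n" unfolding res_sgn_def res_abs_def using r by simp
    thus ?thesis unfolding cong_def by simp
  qed
qed

lemma res_sgn_cases: "res_sgn x = 0 \<or> res_sgn x = 1 \<or> res_sgn x = -1"
  unfolding res_sgn_def by auto

lemma res_sgn_eq_0_iff: "res_sgn x = 0 \<longleftrightarrow> n dvd x"
  unfolding res_sgn_def by (auto simp: mod_eq_0_iff_dvd)

lemma res_abs_eq_0_iff: "res_abs x = 0 \<longleftrightarrow> n dvd x"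
proof -
  have r: "0 \<le> x mod n" "x mod n < n" by (rule pos_mod_sign[OF n_pos], rule pos_mod_bound[OF n_pos])
  have "res_abs x = 0 \<longleftrightarrow> x mod n = 0"
  proof (cases "x mod n \<le> int k")
    case True
    hence "res_abs x = nat (x mod n)" by (simp add: res_abs_def)
    thus ?thesis using r(1) by linarith
  next
    case False
    hence "res_abs x = nat (n - x mod n)" by (simp add: res_abs_def)
    thus ?thesis using r False by linarith
  qed
  thus ?thesis by (simp add: mod_eq_0_iff_dvd)
qed

lemma res_sgn_square: "\<not> n dvd x \<Longrightarrow> res_sgn x * res_sgn x = 1"
  using res_sgn_cases[of x] res_sgn_eq_0_iff[of x] by auto

lemma res_abs_of_nat: "a \<le> k \<Longrightarrow> res_abs (int a) = a"
proof -
  assume a: "a \<le> k"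
  hence "int a mod n = int a" by (intro mod_pos_pos_trivial) auto
  thus ?thesis unfolding res_abs_def using a by simp
qed

lemma res_sgn_of_nat: "1 \<le> a \<Longrightarrow> a \<le> k \<Longrightarrow> res_sgn (int a) = 1"
proof -
  assume a: "1 \<le> a" "a \<le> k"
  hence "int a mod n = int a" by (intro mod_pos_pos_trivial) auto
  thus ?thesis unfolding res_sgn_def using a by simp
qed

lemma n_dvd_doubleD: "n dvd 2 * b \<Longrightarrow> n dvd b"
proof -
  assume "n dvd 2 * b"
  hence "n dvd 2 * b * (int k + 1)" by simp
  moreover have "2 * b * (int k + 1) = b * n + b" by (simp add: algebra_simps)
  ultimately have "n dvd b * n + b" by simp
  thus ?thesis by (simp add: dvd_add_right_iff)
qed

lemma res_abs_eq_iff: "res_abs x = res_abs y \<longleftrightarrow> [x = y] (mod n) \<or> [x = -y] (mod n)"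
proof
  assume "[x = y] (mod n) \<or> [x = -y] (mod n)"
  thus "res_abs x = res_abs y" using res_abs_sgn_cong[of x y] res_abs_sgn_cong[of x "-y"] res_abs_uminus[of y] by auto
next
  assume e: "res_abs x = res_abs y"
  have rx: "n dvd x - res_sgn x * int (res_abs x)" and ry: "n dvd y - res_sgn y * int (res_abs y)"
    using res_sgn_abs_cong[of x] res_sgn_abs_cong[of y] by (simp_all add: cong_iff_dvd_diff)
  show "[x = y] (mod n) \<or> [x = -y] (mod n)"
  proof (cases "res_abs x = 0")
    case True
    hence "n dvd x" "n dvd y" using e res_abs_eq_0_iff[of x] res_abs_eq_0_iff[of y] by auto
    thus ?thesis by (simp add: cong_iff_dvd_diff)
  next
    case False
    hence "\<not> n dvd y" using e res_abs_eq_0_iff[of y] by auto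
    hence sy: "res_sgn y * res_sgn y = 1" by (rule res_sgn_square)
    have "n dvd (x - res_sgn x * int (res_abs x)) - (res_sgn x * res_sgn y) * (y - res_sgn y * int (res_abs y))"
      by (rule dvd_diff[OF rx dvd_mult[OF ry]])
    also have "(x - res_sgn x * int (res_abs x)) - (res_sgn x * res_sgn y) * (y - res_sgn y * int (res_abs y))
        = x - (res_sgn x * res_sgn y) * y"
      using e sy by (simp add: algebra_simps)
    finally have d: "n dvd x - (res_sgn x * res_sgn y) * y" .
    have "res_sgn x * res_sgn y = 1 \<or> res_sgn x * res_sgn y = -1"
      using res_sgn_cases[of x] res_sgn_cases[of y] res_sgn_eq_0_iff[of x] res_sgn_eq_0_iff[of y]
        False e res_abs_eq_0_iff[of x] res_abs_eq_0_iff[of y] by auto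
    thus ?thesis using d by (auto simp: cong_iff_dvd_diff)
  qed
qed

lemma of_bool_cong_plus_minus: assumes w: "\<not> n dvd w"
  shows "(of_bool ([w = b] (mod n)) :: int) + of_bool ([w = -b] (mod n)) = of_bool (res_abs w = res_abs b)"
proof (cases "n dvd b")
  case True
  have "\<not> [w = b] (mod n)"
  proof
    assume "[w = b] (mod n)" hence "n dvd w - b" by (simp add: cong_iff_dvd_diff)
    hence "n dvd (w - b) + b" using True by (rule dvd_add)
    thus False using w by simp
  qed
  moreover have "\<not> [w = -b] (mod n)"
  proof
    assume "[w = -b] (mod n)" hence "n dvd w + b" by (simp add: cong_iff_dvd_diff)
    hence "n dvd (w + b) - b" using True by (rule dvd_diff)
    thus False using w by simp
  qed
  moreover have "res_abs w \<noteq> res_abs b" using True w res_abs_eq_0_iff[of w] res_abs_eq_0_iff[of b] by auto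
  ultimately show ?thesis by (simp add: of_bool_def)
next
  case False
  have "\<not> ([w = b] (mod n) \<and> [w = -b] (mod n))"
  proof
    assume "[w = b] (mod n) \<and> [w = -b] (mod n)"
    hence "n dvd w - b" "n dvd w + b" by (auto simp: cong_iff_dvd_diff)
    hence "n dvd (w + b) - (w - b)" by (rule dvd_diff[rotated])
    hence "n dvd 2 * b" by simp
    thus False using False n_dvd_doubleD by blast
  qed
  moreover have "res_abs w = res_abs b \<longleftrightarrow> [w = b] (mod n) \<or> [w = -b] (mod n)" by (rule res_abs_eq_iff)
  ultimately show ?thesis by (auto simp: of_bool_def)
qed

lemma res_abs_dvdI: "n dvd x - y \<Longrightarrow> res_abs x = res_abs y"
  using res_abs_sgn_cong[of x y] by (simp add: cong_iff_dvd_diff)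

lemma res_sgn_dvdI: "n dvd x - y \<Longrightarrow> res_sgn x = res_sgn y"
  using res_abs_sgn_cong[of x y] by (simp add: cong_iff_dvd_diff)

definition step_row :: "nat \<Rightarrow> nat \<Rightarrow> int" where
  "step_row a v = of_bool (a - 1 = v) - of_bool (res_abs (int a + 1) = v)"

lemma res_sgn_abs_dvd: "n dvd z - res_sgn z * int (res_abs z)"
  using res_sgn_abs_cong[of z] by (simp add: cong_iff_dvd_diff)

lemma res_sgn_plus_minus: "\<not> n dvd z \<Longrightarrow> res_sgn z = 1 \<or> res_sgn z = -1"
  using res_sgn_cases[of z] res_sgn_eq_0_iff[of z] by auto

lemma res_abs_pos: "\<not> n dvd z \<Longrightarrow> 1 \<le> res_abs z"
  using res_abs_eq_0_iff[of z] by auto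

lemma step_row_eq_cong_count: assumes z: "\<not> n dvd z" and w: "\<not> n dvd w"
  shows "(of_bool ([z + w = 1] (mod n)) :: int) + of_bool ([z - w = 1] (mod n)) - of_bool ([z + w = -1] (mod n)) - of_bool ([z - w = -1] (mod n))
     = res_sgn z * step_row (res_abs z) (res_abs w)"
proof -
  have e1: "[z + w = 1] (mod n) \<longleftrightarrow> [w = 1 - z] (mod n)" "[z - w = 1] (mod n) \<longleftrightarrow> [w = -(1 - z)] (mod n)"
    "[z + w = -1] (mod n) \<longleftrightarrow> [w = -1 - z] (mod n)" "[z - w = -1] (mod n) \<longleftrightarrow> [w = -(-1 - z)] (mod n)"
    by (simp_all add: cong_iff_dvd_diff algebra_simps dvd_diff_commute)
  have s1: "(of_bool ([z + w = 1] (mod n)) :: int) + of_bool ([z - w = 1] (mod n)) = of_bool (res_abs w = res_abs (1 - z))"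
    unfolding e1 by (rule of_bool_cong_plus_minus[OF w])
  have s2: "(of_bool ([z + w = -1] (mod n)) :: int) + of_bool ([z - w = -1] (mod n)) = of_bool (res_abs w = res_abs (-1 - z))"
    unfolding e1 by (rule of_bool_cong_plus_minus[OF w])
  define a where "a = res_abs z"
  have a: "1 \<le> a" "a \<le> k" using res_abs_pos[OF z] res_abs_le[of z] by (auto simp: a_def)
  have r: "n dvd z - res_sgn z * int a" using res_sgn_abs_dvd[of z] by (simp add: a_def)
  have am1: "res_abs (int a - 1) = a - 1" using res_abs_of_nat[of "a - 1"] a by (simp add: of_nat_diff)
  from res_sgn_plus_minus[OF z] show ?thesis
  proof
    assume sz: "res_sgn z = 1"
    have "res_abs (1 - z) = res_abs (-(int a - 1))" using r sz by (intro res_abs_dvdI) (simp add: dvd_diff_commute algebra_simps)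
    moreover have "res_abs (-(int a - 1)) = res_abs (int a - 1)" by (rule res_abs_uminus)
    ultimately have c1: "res_abs (1 - z) = a - 1" using am1 by simp
    have "res_abs (-1 - z) = res_abs (-(int a + 1))" using r sz by (intro res_abs_dvdI) (simp add: dvd_diff_commute algebra_simps)
    moreover have "res_abs (-(int a + 1)) = res_abs (int a + 1)" by (rule res_abs_uminus)
    ultimately have c2: "res_abs (-1 - z) = res_abs (int a + 1)" by simp
    show ?thesis using s1 s2 unfolding step_row_def a_def[symmetric] c1 c2 sz
      eq_commute[of "res_abs w"] mult_1 by (simp only: diff_diff_eq)
  next
    assume sz: "res_sgn z = -1"
    have r'': "n dvd z + int a" using r sz by simp
    have "(1 - z) - (int a + 1) = -(z + int a)" by simp
    hence "n dvd (1 - z) - (int a + 1)" using r'' by (simp only: dvd_minus_iff)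
    hence c1: "res_abs (1 - z) = res_abs (int a + 1)" by (rule res_abs_dvdI)
    have "(-1 - z) - (int a - 1) = -(z + int a)" by simp
    hence "n dvd (-1 - z) - (int a - 1)" using r'' by (simp only: dvd_minus_iff)
    hence "res_abs (-1 - z) = res_abs (int a - 1)" by (rule res_abs_dvdI)
    hence c2: "res_abs (-1 - z) = a - 1" using am1 by simp
    show ?thesis using s1 s2 unfolding step_row_def a_def[symmetric] c1 c2 sz
      eq_commute[of "res_abs w"] mult_minus1 minus_diff_eq by (simp only: diff_diff_eq)
  qed
qed

lemma step_row_0_eq_cong_count:
  assumes z: "\<not> n dvd z"
  shows "(of_bool ([z = 1] (mod n)) :: int) - of_bool ([z = -1] (mod n)) = res_sgn z * step_row (res_abs z) 0"
proof -
  define a where "a = res_abs z"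
  have a: "1 \<le> a" "a \<le> k" using res_abs_pos[OF z] res_abs_le[of z] by (auto simp: a_def)
  have za: "z mod n = (res_sgn z * int a) mod n" using res_sgn_abs_cong[of z] by (simp add: a_def cong_def)
  have a1: "[int a = 1] (mod n) \<longleftrightarrow> a = 1" using a by (auto simp: cong_def)
  have "\<not> n dvd int a + 1" using a by (intro zdvd_not_zless) auto
  hence a_1: "\<not> [int a = -1] (mod n)" and "res_abs (int a + 1) \<noteq> 0"
    by (simp_all add: cong_iff_dvd_diff res_abs_eq_0_iff)
  hence step: "step_row a 0 = of_bool (a = 1)" using a by (simp add: step_row_def)
  from res_sgn_plus_minus[OF z] show ?thesis
  proof
    assume sz: "res_sgn z = 1"
    hence "[z = t] (mod n) \<longleftrightarrow> [int a = t] (mod n)" for t using za by (simp add: cong_def)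
    thus ?thesis using sz step a1 a_1 by (simp add: a_def)
  next
    assume sz: "res_sgn z = -1"
    hence "[z = t] (mod n) \<longleftrightarrow> [- int a = t] (mod n)" for t using za by (simp add: cong_def)
    hence "[z = -1] (mod n) \<longleftrightarrow> a = 1" "\<not> [z = 1] (mod n)"
      using a1 a_1 cong_minus_minus_iff[of "int a" 1 n] cong_minus_minus_iff[of "int a" "-1" n] by auto
    thus ?thesis using sz step by (simp add: a_def)
  qed
qed

lemma step_row_sum: assumes "1 \<le> a" "a \<le> k" shows "(\<Sum>v<Suc k. step_row a v) = 0"
proof -
  have "(\<Sum>v<Suc k. step_row a v) = (\<Sum>v<Suc k. of_bool (a - 1 = v)) - (\<Sum>v<Suc k. of_bool (res_abs (int a + 1) = v))"
    unfolding step_row_def by (simp add: sum_subtractf)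
  also have "(\<Sum>v<Suc k. of_bool (a - 1 = v)) = 1" using assms unfolding of_bool_def by (simp add: sum.delta)
  also have "(\<Sum>v<Suc k. of_bool (res_abs (int a + 1) = v)) = 1" using res_abs_le[of "int a + 1"] unfolding of_bool_def by (simp add: sum.delta)
  finally show ?thesis by simp
qed

lemma less_res_abs_Suc_Suc: "a < k \<Longrightarrow> a < res_abs (int (a + 1) + 1)"
proof (cases "a + 2 \<le> k")
  case True
  moreover have "int (a + 1) + 1 = int (a + 2)" by simp
  ultimately show ?thesis using res_abs_of_nat[of "a + 2"] by simp
next
  case False
  assume "a < k"
  hence "int (a + 1) + 1 - (-(int k)) = n" using False by simp
  hence "res_abs (int (a + 1) + 1) = res_abs (-(int k))" by (intro res_abs_dvdI) simp
  thus ?thesis using \<open>a < k\<close> False res_abs_uminus res_abs_of_nat[of k] by simp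
qed

lemma det_step_rows: "det (mat k k (\<lambda>(a, v). step_row (a + 1) v)) = 1"
proof (rule det_upper_unitriangular)
  fix a v assume "v < a" "a < k"
  thus "step_row (a + 1) v = 0"
    using less_res_abs_Suc_Suc[of a] by (simp add: step_row_def)
next
  fix a assume "a < k"
  thus "step_row (a + 1) a = 1"
    using less_res_abs_Suc_Suc[of a] by (simp add: step_row_def)
qed

lemma signed_perm_mat_mult_step_rows: assumes z: "\<And>i. i < k \<Longrightarrow> \<not> n dvd z i"
  shows "mat k k (\<lambda>(i,a). if res_abs (z i) = a+1 then res_sgn (z i) else 0) * mat k k (\<lambda>(a,v). step_row (a+1) v)
       = mat k k (\<lambda>(i,v). res_sgn (z i) * step_row (res_abs (z i)) v)"
proof (rule eq_matI)
  fix i v assume iv: "i < dim_row (mat k k (\<lambda>(i,v). res_sgn (z i) * step_row (res_abs (z i)) v))"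
     "v < dim_col (mat k k (\<lambda>(i,v). res_sgn (z i) * step_row (res_abs (z i)) v))"
  hence i: "i < k" and v: "v < k" by auto
  have c: "1 \<le> res_abs (z i)" "res_abs (z i) \<le> k" using res_abs_pos[OF z[OF i]] res_abs_le by auto
  have "(\<Sum>a = 0..<k. (if res_abs (z i) = a+1 then res_sgn (z i) else 0) * step_row (a+1) v)
      = (\<Sum>a = 0..<k. if a = res_abs (z i) - 1 then res_sgn (z i) * step_row (res_abs (z i)) v else 0)"
    by (intro sum.cong refl) (use c in auto)
  also have "\<dots> = res_sgn (z i) * step_row (res_abs (z i)) v" using c by (simp add: sum.delta)
  finally show "(mat k k (\<lambda>(i,a). if res_abs (z i) = a+1 then res_sgn (z i) else 0) * mat k k (\<lambda>(a,v). step_row (a+1) v)) $$ (i, v)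
      = mat k k (\<lambda>(i,v). res_sgn (z i) * step_row (res_abs (z i)) v) $$ (i, v)"
    using i v by (simp add: scalar_prod_def)
qed auto

lemma det_signed_perm_mat: assumes z: "\<And>i. i < k \<Longrightarrow> \<not> n dvd z i"
  and sigma: "(\<lambda>i. if i < k then res_abs (z i) - 1 else i) permutes {0..<k}"
  shows "det (mat k k (\<lambda>(i,a). if res_abs (z i) = a+1 then res_sgn (z i) else 0))
    = sign (\<lambda>i. if i < k then res_abs (z i) - 1 else i) * (\<Prod>i=0..<k. res_sgn (z i))"
proof -
  let ?s = "\<lambda>i. if i < k then res_abs (z i) - 1 else i"
  have c: "1 \<le> res_abs (z i)" if "i < k" for i using res_abs_pos[OF z[OF that]] .
  have "det (mat k k (\<lambda>(i,a). if res_abs (z i) = a+1 then res_sgn (z i) else 0))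
    = signof ?s * (\<Prod>i=0..<k. mat k k (\<lambda>(i,a). if res_abs (z i) = a+1 then res_sgn (z i) else 0) $$ (i, ?s i))"
  proof (rule det_unique_perm[OF _ sigma])
    fix p assume p: "p permutes {0..<k}"
      and nz: "\<forall>i<k. mat k k (\<lambda>(i,a). if res_abs (z i) = a+1 then res_sgn (z i) else 0) $$ (i, p i) \<noteq> 0"
    show "p = ?s"
    proof
      fix i show "p i = ?s i"
      proof (cases "i < k")
        case True
        have "p i < k" using p True permutes_in_image by fastforce
        with nz True have "res_abs (z i) = p i + 1" by (auto split: if_splits)
        thus ?thesis using True by simp
      next
        case False thus ?thesis using permutes_not_in[OF p] by simp
      qed
    qed
  qed simp
  also have "(\<Prod>i=0..<k. mat k k (\<lambda>(i,a). if res_abs (z i) = a+1 then res_sgn (z i) else 0) $$ (i, ?s i)) = (\<Prod>i=0..<k. res_sgn (z i))"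
  proof (intro prod.cong refl)
    fix i assume "i \<in> {0..<k}"
    hence i: "i < k" by simp
    have "res_abs (z i) - 1 < k" using res_abs_le[of "z i"] c[OF i] by simp
    thus "mat k k (\<lambda>(i,a). if res_abs (z i) = a+1 then res_sgn (z i) else 0) $$ (i, ?s i) = res_sgn (z i)"
      using i c[OF i] by simp
  qed
  finally show ?thesis by simp
qed

lemma res_sgn_of_nat_eq_power: assumes "\<not> (2 * k + 1) dvd N"
  shows "res_sgn (int N) = (-1) ^ ((2 * N) div (2 * k + 1))"
proof -
  define r where "r = N mod (2*k+1)"
  define q where "q = N div (2*k+1)"
  have N: "N = q * (2*k+1) + r" unfolding r_def q_def by (rule div_mult_mod_eq[symmetric])
  have r: "r < 2*k+1" "r \<noteq> 0" using assms by (auto simp: r_def mod_eq_0_iff_dvd)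
  have e2: "int (2*k+1) = n" by simp
  have im: "int N mod n = int r" unfolding r_def zmod_int e2 ..
  have "(2 * N) div (2*k+1) = 2 * q + (2 * r) div (2*k+1)"
  proof -
    have e3: "2 * N = (2 * r) + (2*q) * (2*k+1)" using N by (simp add: algebra_simps)
    show ?thesis by (subst e3, rule div_mult_self1, simp)
  qed
  moreover have "(2 * r) div (2*k+1) = (if r \<le> k then 0 else 1)"
  proof (cases "r \<le> k")
    case True thus ?thesis by simp
  next
    case False
    hence "2*k+1 \<le> 2 * r" "2 * r < 2 * (2*k+1)" using r by auto
    hence "(2 * r) div (2*k+1) = 1" by (intro div_nat_eqI) auto
    thus ?thesis using False by simp
  qed
  ultimately have e: "(-1::int) ^ ((2 * N) div (2*k+1)) = (if r \<le> k then 1 else -1)"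
    by (simp add: power_add power_mult)
  have "res_sgn (int N) = (if r \<le> k then 1 else -1)" unfolding res_sgn_def im using r by simp
  thus ?thesis using e by simp
qed

end
section \<open>Multiplication permutes the classes \<open>\<plusminus>x\<close>\<close>

locale mod_unit = odd_modulus +
  fixes g h :: int
  assumes g_h_cong: "n dvd g * h - 1"
begin

lemma g_cancel: "n dvd g * x \<Longrightarrow> n dvd x"
proof -
  assume "n dvd g * x"
  hence "n dvd g * x * h - x * (g * h - 1)" using g_h_cong by (intro dvd_diff) auto
  also have "g * x * h - x * (g * h - 1) = x" by (simp add: algebra_simps)
  finally show ?thesis .
qed

lemma h_cancel: "n dvd h * x \<Longrightarrow> n dvd x"
proof -
  assume "n dvd h * x"
  hence "n dvd h * x * g - x * (g * h - 1)" using g_h_cong by (intro dvd_diff) auto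
  also have "h * x * g - x * (g * h - 1) = x" by (simp add: algebra_simps)
  finally show ?thesis .
qed

definition mult_perm :: "nat \<Rightarrow> nat" where
  "mult_perm x = (if x \<le> k then res_abs (g * int x) else x)"

lemma mult_perm_0: "mult_perm 0 = 0" unfolding mult_perm_def using res_abs_of_nat[of 0] by simp

lemma mult_perm_le: "x \<le> k \<Longrightarrow> mult_perm x \<le> k" unfolding mult_perm_def using res_abs_le by simp

lemma mult_perm_inj: assumes "x \<le> k" "y \<le> k" "mult_perm x = mult_perm y" shows "x = y"
proof -
  have "res_abs (g * int x) = res_abs (g * int y)" using assms unfolding mult_perm_def by simp
  hence "[g * int x = g * int y] (mod n) \<or> [g * int x = - (g * int y)] (mod n)" by (simp add: res_abs_eq_iff)
  hence "n dvd g * (int x - int y) \<or> n dvd g * (int x + int y)" by (auto simp: cong_iff_dvd_diff right_diff_distrib distrib_left)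
  hence "n dvd int x - int y \<or> n dvd int x + int y" using g_cancel by blast
  thus ?thesis
  proof
    assume "n dvd int x - int y"
    thus ?thesis using assms dvd_imp_le_int[of "int x - int y" n] by (cases "x = y") auto
  next
    assume "n dvd int x + int y"
    thus ?thesis using assms dvd_imp_le_int[of "int x + int y" n] by (cases "x + y = 0") auto
  qed
qed

lemma mult_perm_permutes: "mult_perm permutes {0..k}"
  by (rule inj_imp_permutes) (auto simp: inj_on_def mult_perm_le res_abs_le intro: mult_perm_inj simp: mult_perm_def)

lemma mult_perm_permutes_pos: "mult_perm permutes {1..k}"
proof (rule inj_imp_permutes)
  show "inj_on mult_perm {1..k}" by (auto simp: inj_on_def intro: mult_perm_inj)
  fix x
  show "x \<in> {1..k} \<Longrightarrow> mult_perm x \<in> {1..k}"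
  proof -
    assume x: "x \<in> {1..k}"
    have "mult_perm x \<noteq> 0" using mult_perm_inj[of x 0] mult_perm_0 x by auto
    thus ?thesis using mult_perm_le x by auto
  qed
  show "x \<notin> {1..k} \<Longrightarrow> mult_perm x = x" using mult_perm_0 by (cases "x = 0") (auto simp: mult_perm_def)
qed simp

lemma permutation_mult_perm: "permutation mult_perm"
  using mult_perm_permutes by (auto simp: permutation_permutes)

definition mult_perm_mat :: "int mat" where
  "mult_perm_mat = mat k k (\<lambda>(v,u). of_bool (mult_perm u = v) - of_bool (mult_perm u = k))"

lemma mat_mult_mult_perm_mat: assumes rs: "\<And>i. i < k \<Longrightarrow> (\<Sum>v<Suc k. F i v) = 0"
  shows "mat k k (\<lambda>(i,v). F i v) * mult_perm_mat = mat k k (\<lambda>(i,u). F i (mult_perm u))"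
proof (rule eq_matI)
  fix i u assume "i < dim_row (mat k k (\<lambda>(i,u). F i (mult_perm u)))" "u < dim_col (mat k k (\<lambda>(i,u). F i (mult_perm u)))"
  hence i: "i < k" and u: "u < k" by auto
  have pu: "mult_perm u \<le> k" using mult_perm_le u by simp
  have "(\<Sum>v = 0..<k. F i v * (of_bool (mult_perm u = v) - of_bool (mult_perm u = k))) = F i (mult_perm u)"
  proof (cases "mult_perm u = k")
    case True
    have "(\<Sum>v = 0..<k. F i v * (of_bool (mult_perm u = v) - of_bool (mult_perm u = k))) = - (\<Sum>v<k. F i v)"
      using True by (simp add: of_bool_def sum_negf atLeast0LessThan)
    also have "\<dots> = F i k" using rs[OF i] by simp
    finally show ?thesis using True by simp
  next
    case False
    hence "mult_perm u < k" using pu by simp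
    have "(\<Sum>v = 0..<k. F i v * (of_bool (mult_perm u = v) - of_bool (mult_perm u = k)))
        = (\<Sum>v = 0..<k. if v = mult_perm u then F i (mult_perm u) else 0)"
      using False by (intro sum.cong refl) (auto simp: of_bool_def)
    thus ?thesis using \<open>mult_perm u < k\<close> by (simp add: sum.delta)
  qed
  thus "(mat k k (\<lambda>(i,v). F i v) * mult_perm_mat) $$ (i, u) = mat k k (\<lambda>(i,u). F i (mult_perm u)) $$ (i, u)"
    using i u by (simp add: mult_perm_mat_def scalar_prod_def)
qed (auto simp: mult_perm_mat_def)


definition qperm :: "nat \<Rightarrow> nat" where "qperm = inv_into UNIV mult_perm \<circ> Transposition.transpose (mult_perm k) k"

lemma qperm_permutes: "qperm permutes {0..<k}"
proof -
  have pk: "mult_perm k \<in> {0..k}" using mult_perm_le by simp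
  have t: "Transposition.transpose (mult_perm k) k permutes {0..k}" by (rule permutes_swap_id[OF pk]) simp
  have i: "inv_into UNIV mult_perm permutes {0..k}" by (rule permutes_inv[OF mult_perm_permutes])
  have c: "qperm permutes {0..k}" unfolding qperm_def by (rule permutes_compose[OF t i])
  have qk: "qperm k = k" unfolding qperm_def using permutes_inverses(2)[OF mult_perm_permutes, of k] by simp
  show ?thesis
  proof (rule permutes_superset[OF c])
    fix x assume "x \<in> {0..k} - {0..<k}"
    hence "x = k" by simp
    thus "qperm x = x" using qk by simp
  qed
qed

lemma mult_perm_qperm: "v < k \<Longrightarrow> mult_perm (qperm v) = (if v = mult_perm k then k else v)"
  unfolding qperm_def using permutes_inverses[OF mult_perm_permutes] by (auto simp: transpose_def)

lemma sign_qperm: "sign qperm = sign mult_perm * (if mult_perm k = k then 1 else -1)"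
proof -
  have "sign qperm = sign (inv_into UNIV mult_perm) * sign (Transposition.transpose (mult_perm k) k)"
    unfolding qperm_def by (rule sign_compose) (auto simp: permutation_inverse permutation_mult_perm permutation_swap_id)
  thus ?thesis by (simp add: sign_inverse permutation_mult_perm sign_swap_id)
qed

lemma mult_perm_mat_nonzero_imp_qperm:
  assumes p: "p permutes {0..<k}" and nz: "\<forall>v<k. mult_perm_mat $$ (v, p v) \<noteq> 0"
  shows "p = qperm"
proof -
  have inj: "mult_perm x = mult_perm y \<longleftrightarrow> x = y" if "x \<le> k" "y \<le> k" for x y
    using mult_perm_inj that by blast
  have pk: "p v < k" if "v < k" for v using p that permutes_in_image by fastforce
  have alt: "mult_perm (p v) = v \<or> mult_perm (p v) = k" if v: "v < k" for v
  proof -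
    have "mult_perm_mat $$ (v, p v) = of_bool (mult_perm (p v) = v) - of_bool (mult_perm (p v) = k)"
      using v pk[OF v] by (simp add: mult_perm_mat_def)
    thus ?thesis using nz v by (cases "mult_perm (p v) = v") auto
  qed
  have ne: "mult_perm (p v) \<noteq> mult_perm k" if "v < k" for v
    using inj[of "p v" k] pk[OF that] by simp
  have top_iff: "mult_perm (p v) = k \<longleftrightarrow> v = mult_perm k" if v: "v < k" for v
  proof
    assume top: "mult_perm (p v) = k"
    hence "mult_perm k \<noteq> k" using ne[OF v] by auto
    hence w: "mult_perm k < k" using mult_perm_le[of k] by simp
    hence "mult_perm (p (mult_perm k)) = k" using alt[OF w] ne[OF w] by auto
    hence "p v = p (mult_perm k)"
      using top inj[of "p v" "p (mult_perm k)"] pk[OF v] pk[OF w] by simp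
    thus "v = mult_perm k" using permutes_inj[OF p] by (simp add: inj_eq)
  qed (use alt ne v in blast)
  show "p = qperm"
  proof
    fix v show "p v = qperm v"
    proof (cases "v < k")
      case True
      have "qperm v < k" using qperm_permutes True permutes_in_image by fastforce
      moreover have "mult_perm (p v) = mult_perm (qperm v)"
        using alt[OF True] top_iff[OF True] mult_perm_qperm[OF True] by auto
      ultimately show ?thesis using inj[of "p v" "qperm v"] pk[OF True] by simp
    next
      case False thus ?thesis using permutes_not_in[OF p] permutes_not_in[OF qperm_permutes] by simp
    qed
  qed
qed

lemma det_mult_perm_mat: "det mult_perm_mat = sign mult_perm"
proof -
  have "det mult_perm_mat = signof qperm * (\<Prod>v=0..<k. mult_perm_mat $$ (v, qperm v))"
    by (rule det_unique_perm[OF _ qperm_permutes mult_perm_mat_nonzero_imp_qperm])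
      (simp_all add: mult_perm_mat_def)
  also have "(\<Prod>v=0..<k. mult_perm_mat $$ (v, qperm v)) = (\<Prod>v=0..<k. if v = mult_perm k then -1 else 1)"
  proof (intro prod.cong refl)
    fix v assume "v \<in> {0..<k}"
    hence v: "v < k" by simp
    moreover have "qperm v < k" using qperm_permutes v permutes_in_image by fastforce
    ultimately show "mult_perm_mat $$ (v, qperm v) = (if v = mult_perm k then -1 else 1)"
      using mult_perm_qperm[OF v] by (simp add: mult_perm_mat_def)
  qed
  also have "\<dots> = (if mult_perm k = k then 1 else -1)"
    using mult_perm_le[of k] by (simp add: prod.delta)
  finally show ?thesis using sign_qperm by (simp add: mult.assoc)
qed

definition mult_perm_pred :: "nat \<Rightarrow> nat" where
  "mult_perm_pred i = (if i < k then mult_perm (Suc i) - 1 else i)"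

lemma mult_perm_pred_permutes: "mult_perm_pred permutes {0..<k}"
  and sign_mult_perm_pred: "sign mult_perm_pred = sign mult_perm"
proof -
  have bj: "bij_betw (\<lambda>x. x - 1) {1..k} {0..<k}" by (rule bij_betw_byWitness[where f'=Suc]) auto
  interpret pb: permutes_bij_finite mult_perm "{1..k}" "{0..<k}" "\<lambda>x. x - 1" Suc
    "\<lambda>x. if x \<in> {0..<k} then mult_perm (Suc x) - 1 else x"
    by (unfold_locales; (rule reflexive)?) (simp_all only: mult_perm_permutes_pos bj, auto)
  have e: "mult_perm_pred = (\<lambda>x. if x \<in> {0..<k} then mult_perm (Suc x) - 1 else x)"
    by (auto simp: mult_perm_pred_def)
  show "mult_perm_pred permutes {0..<k}" unfolding e by (rule pb.permutes_p')
  show "sign mult_perm_pred = sign mult_perm" unfolding e by (rule pb.sign_p')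
qed

lemma res_sgn_h_mult_perm:
  assumes x: "x \<in> {1..k}"
  shows "res_sgn (h * int (mult_perm x)) = res_sgn (g * int x)"
proof -
  define a where "a = mult_perm x"
  define s where "s = res_sgn (g * int x)"
  have "\<not> n dvd int x" using x by (intro zdvd_not_zless) auto
  hence nd: "\<not> n dvd g * int x" using g_cancel by blast
  have s: "s * s = 1" unfolding s_def by (rule res_sgn_square[OF nd])
  have r: "n dvd g * int x - s * int a"
    using x res_sgn_abs_dvd[of "g * int x"] by (simp add: a_def s_def mult_perm_def)
  have "n dvd (s * h) * (g * int x - s * int a) - s * int x * (g * h - 1)"
    by (rule dvd_diff[OF dvd_mult[OF r] dvd_mult[OF g_h_cong]])
  also have "(s * h) * (g * int x - s * int a) - s * int x * (g * h - 1) = - (h * int a - s * int x)"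
    using s by (simp add: algebra_simps)
  finally have "res_sgn (h * int a) = res_sgn (s * int x)"
    by (intro res_sgn_dvdI) (simp add: dvd_diff_commute)
  also have "res_sgn (s * int x) = s"
  proof -
    have "s = 1 \<or> s = -1" unfolding s_def by (rule res_sgn_plus_minus[OF nd])
    moreover have "res_sgn (int x) = 1" using x by (intro res_sgn_of_nat) auto
    ultimately show ?thesis using res_sgn_uminus[of "int x"] by auto
  qed
  finally show ?thesis by (simp add: a_def s_def)
qed

lemma prod_res_sgn_g_eq_h: "(\<Prod>x\<in>{1..k}. res_sgn (g * int x)) = (\<Prod>x\<in>{1..k}. res_sgn (h * int x))"
proof -
  have "(\<Prod>x\<in>{1..k}. res_sgn (h * int x)) = (\<Prod>x\<in>mult_perm ` {1..k}. res_sgn (h * int x))"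
    using permutes_image[OF mult_perm_permutes_pos] by simp
  also have "\<dots> = (\<Prod>x\<in>{1..k}. res_sgn (h * int (mult_perm x)))"
    by (subst prod.reindex) (auto simp: inj_on_def intro: mult_perm_inj)
  also have "\<dots> = (\<Prod>x\<in>{1..k}. res_sgn (g * int x))"
    by (rule prod.cong) (simp_all add: res_sgn_h_mult_perm)
  finally show ?thesis by simp
qed

end
section \<open>The coprime case\<close>

text \<open>\<open>m\<close> plays the role of \<open>s + 1\<close>; the congruence makes \<open>g\<close> twice an inverse of \<open>m\<close>.\<close>

locale mod_half = odd_modulus +
  fixes g m :: int
  assumes g_m_cong: "n dvd g * m - 2"
begin

definition g_inv :: int where "g_inv = (int k + 1) * m"
definition m_inv :: int where "m_inv = (int k + 1) * g"

sublocale mod_unit k g g_inv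
proof
  have "g * g_inv - 1 = (int k + 1) * (g * m - 2) + n" by (simp add: g_inv_def algebra_simps)
  thus "n dvd g * g_inv - 1" using g_m_cong by (simp only: dvd_add dvd_mult dvd_refl)
qed

lemma m_inv_m_cong: "n dvd m_inv * m - 1"
proof -
  have "m_inv * m - 1 = (int k + 1) * (g * m - 2) + n" by (simp add: m_inv_def algebra_simps)
  thus ?thesis using g_m_cong by (simp only: dvd_add dvd_mult dvd_refl)
qed

lemma two_m_inv_eq: "2 * m_inv = g + n * g" by (simp add: m_inv_def algebra_simps)

lemma cong_double_n_iff: assumes "2 dvd X - Y" shows "[X = Y] (mod 2 * n) \<longleftrightarrow> [X = Y] (mod n)"
proof -
  obtain t where "X - Y = 2 * t" using assms by blast
  moreover have "2 * n dvd 2 * t \<longleftrightarrow> n dvd t" by (simp only: dvd_mult_cancel_left) simp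
  ultimately show ?thesis using n_dvd_doubleD[of t] by (auto simp: cong_iff_dvd_diff)
qed

lemma cong_mult_m_iff: "[X = t * m] (mod n) \<longleftrightarrow> [m_inv * X = t] (mod n)"
proof
  assume "[X = t * m] (mod n)"
  hence "n dvd m_inv * (X - t * m) + t * (m_inv * m - 1)"
    using m_inv_m_cong by (intro dvd_add) (simp_all add: cong_iff_dvd_diff)
  thus "[m_inv * X = t] (mod n)" by (simp add: cong_iff_dvd_diff algebra_simps)
next
  assume "[m_inv * X = t] (mod n)"
  hence "n dvd m * (m_inv * X - t) - X * (m_inv * m - 1)"
    using m_inv_m_cong by (intro dvd_diff) (simp_all add: cong_iff_dvd_diff)
  thus "[X = t * m] (mod n)" by (simp add: cong_iff_dvd_diff algebra_simps)
qed

lemma refl_delta_eq_cong_count: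
  assumes "2 dvd X - m"
  shows "refl_delta (2 * n) m X = of_bool ([m_inv * X = 1] (mod n)) - of_bool ([m_inv * X = -1] (mod n))"
proof -
  have "X + m = (X - m) + 2 * m" by simp
  hence "2 dvd X - (-m)" using assms by simp
  thus ?thesis using cong_double_n_iff[OF assms] cong_double_n_iff[of X "-m"]
      cong_mult_m_iff[of X 1] cong_mult_m_iff[of X "-1"]
    by (simp add: refl_delta_def)
qed

lemma sym_delta_eq_step_row:
  assumes p: "2 dvd p - m" "\<not> n dvd m_inv * p" and u: "u < k"
  shows "sym_delta (2 * n) m u p = res_sgn (m_inv * p) * step_row (res_abs (m_inv * p)) (mult_perm u)"
proof (cases "u = 0")
  case True
  thus ?thesis using step_row_0_eq_cong_count[OF p(2)] refl_delta_eq_cong_count[OF p(1)] mult_perm_0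
    by (simp add: sym_delta_def)
next
  case False
  have "\<not> n dvd int u" using False u by (intro zdvd_not_zless) auto
  hence w: "\<not> n dvd g * int u" using g_cancel by blast
  have par: "2 dvd (p + 2 * int u) - m" "2 dvd (p - 2 * int u) - m"
    using p(1) by presburger+
  have "m_inv * (p + 2 * int u) - t = (m_inv * p + g * int u - t) + (g * int u) * n"
    "m_inv * (p - 2 * int u) - t = (m_inv * p - g * int u - t) + (- g * int u) * n" for t
    using two_m_inv_eq by (simp_all add: algebra_simps)
  hence shift: "[m_inv * (p + 2 * int u) = t] (mod n) \<longleftrightarrow> [m_inv * p + g * int u = t] (mod n)"
    "[m_inv * (p - 2 * int u) = t] (mod n) \<longleftrightarrow> [m_inv * p - g * int u = t] (mod n)" for t
    unfolding cong_iff_dvd_diff by (simp_all only: dvd_add_times_triv_right_iff)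
  have "sym_delta (2 * n) m u p = refl_delta (2 * n) m (p + 2 * int u) + refl_delta (2 * n) m (p - 2 * int u)"
    using False by (simp add: sym_delta_def)
  also have "\<dots> = of_bool ([m_inv * p + g * int u = 1] (mod n))
      + of_bool ([m_inv * p - g * int u = 1] (mod n))
      - of_bool ([m_inv * p + g * int u = -1] (mod n)) - of_bool ([m_inv * p - g * int u = -1] (mod n))"
    unfolding refl_delta_eq_cong_count[OF par(1)] refl_delta_eq_cong_count[OF par(2)] shift by simp
  also have "\<dots> = res_sgn (m_inv * p) * step_row (res_abs (m_inv * p)) (res_abs (g * int u))"
    by (rule step_row_eq_cong_count[OF p(2) w])
  finally show ?thesis using u by (simp add: mult_perm_def)
qed

lemma sym_delta_mat_factorization:
  assumes p: "\<And>i. i < k \<Longrightarrow> 2 dvd p i - m" and z: "\<And>i. i < k \<Longrightarrow> \<not> n dvd m_inv * p i"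
  shows "mat k k (\<lambda>(i, u). sym_delta (2 * n) m u (p i))
    = mat k k (\<lambda>(i, a). if res_abs (m_inv * p i) = a + 1 then res_sgn (m_inv * p i) else 0)
      * mat k k (\<lambda>(a, v). step_row (a + 1) v) * mult_perm_mat"
proof -
  let ?z = "\<lambda>i. m_inv * p i"
  have "mat k k (\<lambda>(i, u). sym_delta (2 * n) m u (p i))
      = mat k k (\<lambda>(i, u). res_sgn (?z i) * step_row (res_abs (?z i)) (mult_perm u))"
  proof (rule eq_matI)
    fix i u assume "i < dim_row (mat k k (\<lambda>(i, u). res_sgn (?z i) * step_row (res_abs (?z i)) (mult_perm u)))"
      "u < dim_col (mat k k (\<lambda>(i, u). res_sgn (?z i) * step_row (res_abs (?z i)) (mult_perm u)))"
    hence i: "i < k" and u: "u < k" by auto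
    thus "mat k k (\<lambda>(i, u). sym_delta (2 * n) m u (p i)) $$ (i, u)
        = mat k k (\<lambda>(i, u). res_sgn (?z i) * step_row (res_abs (?z i)) (mult_perm u)) $$ (i, u)"
      using sym_delta_eq_step_row[OF p[OF i] z[OF i] u] by simp
  qed auto
  also have "\<dots> = mat k k (\<lambda>(i, v). res_sgn (?z i) * step_row (res_abs (?z i)) v) * mult_perm_mat"
  proof (rule mat_mult_mult_perm_mat[symmetric])
    fix i assume i: "i < k"
    have "(\<Sum>v<Suc k. res_sgn (?z i) * step_row (res_abs (?z i)) v)
        = res_sgn (?z i) * (\<Sum>v<Suc k. step_row (res_abs (?z i)) v)"
      by (rule sum_distrib_left[symmetric])
    thus "(\<Sum>v<Suc k. res_sgn (?z i) * step_row (res_abs (?z i)) v) = 0"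
      using step_row_sum[of "res_abs (?z i)"] res_abs_pos[OF z[OF i]] res_abs_le by simp
  qed
  also have "mat k k (\<lambda>(i, v). res_sgn (?z i) * step_row (res_abs (?z i)) v)
      = mat k k (\<lambda>(i, a). if res_abs (?z i) = a + 1 then res_sgn (?z i) else 0) * mat k k (\<lambda>(a, v). step_row (a + 1) v)"
    by (rule signed_perm_mat_mult_step_rows[symmetric]) (rule z)
  finally show ?thesis by simp
qed

lemma det_sym_delta_mat_perm_rows:
  assumes p: "\<And>i. i < k \<Longrightarrow> 2 dvd p i - m"
    and \<tau>: "\<tau> permutes {0..<k}" and e: "\<And>i. i < k \<Longrightarrow> e i = 1 \<or> e i = -1"
    and rows: "\<And>i. i < k \<Longrightarrow> [m_inv * p i = e i * (g * int (\<tau> i + 1))] (mod n)"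
  shows "det (mat k k (\<lambda>(i, u). sym_delta (2 * n) m u (p i)))
    = sign \<tau> * (\<Prod>i<k. e i) * (\<Prod>x\<in>{1..k}. res_sgn (g * int x))"
proof -
  have \<tau>k: "\<tau> i < k" if "i < k" for i using \<tau> that permutes_in_image by fastforce
  have row: "res_abs (m_inv * p i) = mult_perm (\<tau> i + 1)
      \<and> res_sgn (m_inv * p i) = e i * res_sgn (g * int (\<tau> i + 1))" if i: "i < k" for i
    using e[OF i] res_abs_sgn_cong[OF rows[OF i]] res_abs_uminus res_sgn_uminus \<tau>k[OF i]
    by (auto simp: mult_perm_def)
  have z: "\<not> n dvd m_inv * p i" if i: "i < k" for i
  proof -
    have "mult_perm (\<tau> i + 1) \<in> {1..k}"
      using permutes_in_image[OF mult_perm_permutes_pos] \<tau>k[OF i] by simp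
    hence "res_abs (m_inv * p i) \<noteq> 0" using row[OF i] by auto
    thus ?thesis by (simp add: res_abs_eq_0_iff)
  qed
  have \<sigma>: "(\<lambda>i. if i < k then res_abs (m_inv * p i) - 1 else i) = mult_perm_pred \<circ> \<tau>"
    using row \<tau>k permutes_not_in[OF \<tau>] by (auto simp: mult_perm_pred_def)
  let ?R = "mat k k (\<lambda>(i, a). if res_abs (m_inv * p i) = a + 1 then res_sgn (m_inv * p i) else 0)"
  let ?D = "mat k k (\<lambda>(a, v). step_row (a + 1) v)"
  have "(\<lambda>i. if i < k then res_abs (m_inv * p i) - 1 else i) permutes {0..<k}"
    unfolding \<sigma> by (rule permutes_compose[OF \<tau> mult_perm_pred_permutes])
  hence R: "det ?R = sign (mult_perm_pred \<circ> \<tau>) * (\<Prod>i=0..<k. res_sgn (m_inv * p i))"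
    using det_signed_perm_mat[of "\<lambda>i. m_inv * p i", OF z] unfolding \<sigma> by simp
  have "det (mat k k (\<lambda>(i, u). sym_delta (2 * n) m u (p i))) = det (?R * ?D * mult_perm_mat)"
    using sym_delta_mat_factorization[OF p z] by simp
  also have "\<dots> = det ?R * det ?D * det mult_perm_mat"
    by (subst det_mult[of _ k], auto simp: mult_perm_mat_def det_mult[of _ k])
  also have "\<dots> = sign (mult_perm_pred \<circ> \<tau>) * (\<Prod>i=0..<k. res_sgn (m_inv * p i)) * sign mult_perm"
    by (simp only: R det_step_rows det_mult_perm_mat mult_1_right)
  also have "sign (mult_perm_pred \<circ> \<tau>) = sign mult_perm * sign \<tau>"
    using sign_compose[OF permutes_imp_permutation[OF _ mult_perm_pred_permutes] permutes_imp_permutation[OF _ \<tau>]]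
    by (simp add: sign_mult_perm_pred)
  also have "(\<Prod>i=0..<k. res_sgn (m_inv * p i)) = (\<Prod>i<k. e i) * (\<Prod>i<k. res_sgn (g * int (\<tau> i + 1)))"
    using row by (simp add: atLeast0LessThan prod.distrib[symmetric])
  also have "(\<Prod>i<k. res_sgn (g * int (\<tau> i + 1))) = (\<Prod>x\<in>{1..k}. res_sgn (g * int x))"
    using prod.permute[OF \<tau>[unfolded atLeast0LessThan], of "\<lambda>i. res_sgn (g * int (i + 1))"]
      prod.atLeast_Suc_lessThan_Suc_shift[of "\<lambda>x. res_sgn (g * int x)" 0 k]
    by (simp add: comp_def atLeast0LessThan atLeastLessThanSuc_atLeastAtMost)
  finally show ?thesis using sign_idempotent[of mult_perm] by (simp add: algebra_simps)
qed

lemma prod_res_sgn_g: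
  assumes "m = int M"
  shows "(\<Prod>x\<in>{1..k}. res_sgn (g * int x))
    = (-1) ^ (M * (\<Sum>x=1..k. x) + (\<Sum>x=1..k. x * M div (2 * k + 1)))"
proof -
  have "res_sgn (g_inv * int x) = (-1) ^ (M * x + x * M div (2 * k + 1))" if x: "x \<in> {1..k}" for x
  proof -
    define N where "N = (k + 1) * M * x"
    have gx: "g_inv * int x = int N" unfolding N_def g_inv_def by (simp add: assms algebra_simps)
    have "\<not> n dvd int x" using x by (intro zdvd_not_zless) auto
    hence "\<not> n dvd int N" using h_cancel unfolding gx[symmetric] by blast
    moreover have "int (2 * k + 1) = n" by simp
    ultimately have "\<not> (2 * k + 1) dvd N" by (metis int_dvd_int_iff)
    moreover have "2 * N = x * M + (M * x) * (2 * k + 1)" by (simp add: N_def algebra_simps)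
    hence "2 * N div (2 * k + 1) = M * x + x * M div (2 * k + 1)"
      by (simp only: div_mult_self1)
    ultimately show ?thesis using res_sgn_of_nat_eq_power[of N] gx by simp
  qed
  hence "(\<Prod>x\<in>{1..k}. res_sgn (g_inv * int x)) = (\<Prod>x\<in>{1..k}. (-1) ^ (M * x + x * M div (2 * k + 1)))"
    by (rule prod.cong[OF refl])
  also have "\<dots> = (-1) ^ (\<Sum>x=1..k. M * x + x * M div (2 * k + 1))"
    by (rule power_sum[symmetric])
  finally show ?thesis using prod_res_sgn_g_eq_h by (simp add: sum.distrib sum_distrib_left)
qed

lemma det_sym_delta_mat_odd:
  assumes m: "m = int s + 1" and s: "odd s"
  shows "det (mat k k (\<lambda>(i, u). sym_delta (2 * n) m u (int (2 * i + 1) + 1)))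
    = (-1) ^ (\<Sum>i=1..k. i * (s + 1) div (2 * k + 1))"
proof -
  define T where "T = (\<Sum>x=1..k. x)"
  have "det (mat k k (\<lambda>(i, u). sym_delta (2 * n) m u (int (2 * i + 1) + 1)))
      = sign (id :: nat \<Rightarrow> nat) * (\<Prod>i<k. 1) * (\<Prod>x\<in>{1..k}. res_sgn (g * int x))"
  proof (rule det_sym_delta_mat_perm_rows[where p = "\<lambda>i. int (2 * i + 1) + 1" and e = "\<lambda>_. 1"])
    fix i
    show "2 dvd int (2 * i + 1) + 1 - m" using s m by presburger
    have "m_inv * (int (2 * i + 1) + 1) - 1 * (g * int (id i + 1)) = n * (g * int (i + 1))"
      using two_m_inv_eq by (simp add: algebra_simps)
    thus "[m_inv * (int (2 * i + 1) + 1) = 1 * (g * int (id i + 1))] (mod n)"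
      by (simp add: cong_iff_dvd_diff)
  qed (simp_all add: permutes_id)
  also have "\<dots> = (-1) ^ ((s + 1) * T + (\<Sum>x=1..k. x * (s + 1) div (2 * k + 1)))"
    using prod_res_sgn_g[of "s + 1"] m by (simp add: T_def)
  also have "\<dots> = (-1) ^ (\<Sum>i=1..k. i * (s + 1) div (2 * k + 1))"
  proof -
    from s obtain s' where "s = 2 * s' + 1" by (rule oddE)
    hence "(s + 1) * T = 2 * ((s' + 1) * T)" by simp
    thus ?thesis by (simp add: power_add power_mult)
  qed
  finally show ?thesis .
qed

text \<open>For even \<open>s\<close> the rows run through the classes \<open>k, \<dots>, 1\<close> in reverse, with sign \<open>-1\<close>.\<close>

lemma det_sym_delta_mat_even:
  assumes m: "m = int s + 1" and s: "even s"
  shows "det (mat k k (\<lambda>(i, u). sym_delta (2 * n) m u (int (2 * i) + 1)))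
    = (-1) ^ (\<Sum>i=1..k. i * (s + 1) div (2 * k + 1))"
proof -
  define T where "T = (\<Sum>x=1..k. x)"
  have "det (mat k k (\<lambda>(i, u). sym_delta (2 * n) m u (int (2 * i) + 1)))
      = sign (rev_perm k) * (\<Prod>i<k. -1) * (\<Prod>x\<in>{1..k}. res_sgn (g * int x))"
  proof (rule det_sym_delta_mat_perm_rows[where p = "\<lambda>i. int (2 * i) + 1" and e = "\<lambda>_. -1"])
    fix i assume i: "i < k"
    show "2 dvd int (2 * i) + 1 - m" using s m by presburger
    have "m_inv * (int (2 * i) + 1) - (-1) * (g * int (rev_perm k i + 1)) = n * (g * int (i + 1))"
      using two_m_inv_eq i by (simp add: rev_perm_def m_inv_def of_nat_diff algebra_simps)
    thus "[m_inv * (int (2 * i) + 1) = -1 * (g * int (rev_perm k i + 1))] (mod n)"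
      by (simp add: cong_iff_dvd_diff)
  qed (simp_all add: rev_perm_permutes)
  also have "\<dots> = (-1) ^ T * (-1) ^ ((s + 1) * T + (\<Sum>x=1..k. x * (s + 1) div (2 * k + 1)))"
  proof -
    have "(\<Sum>x<k. x) + k = T" unfolding T_def by (induction k) auto
    thus ?thesis using prod_res_sgn_g[of "s + 1"] m
      by (simp add: sign_rev_perm T_def power_add[symmetric])
  qed
  also have "\<dots> = (-1) ^ (\<Sum>i=1..k. i * (s + 1) div (2 * k + 1))"
  proof -
    from s obtain s' where "s = 2 * s'" by (auto elim: evenE)
    hence "T + ((s + 1) * T + F) = 2 * ((s' + 1) * T) + F" for F by (simp add: algebra_simps)
    hence "(-1 :: int) ^ T * (-1) ^ ((s + 1) * T + F) = (-1) ^ (2 * ((s' + 1) * T) + F)" for F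
      by (simp only: power_add[symmetric])
    thus ?thesis by (simp add: power_add power_mult)
  qed
  finally show ?thesis .
qed

end

lemma det_refl_walks_mat_coprime:
  fixes k s :: nat
  defines "\<chi> \<equiv> (if odd s then 1 else 0 :: nat)"
  assumes "coprime (s + 1) (2 * k + 1)"
  shows "det (mat k k (\<lambda>(i, j). refl_walks (2 * (2 * int k + 1)) (int s + 1) (2 * j) (int (2 * i + \<chi>) + 1)))
    = (-1) ^ (\<Sum>i=1..k. i * (s + 1) div (2 * k + 1))"
proof -
  obtain x where "[(s + 1) * x = 1] (mod 2 * k + 1)" using cong_solve_coprime_nat[OF assms(2)] by auto
  hence "2 * int k + 1 dvd 2 * (int (s + 1) * int x - 1)"
    by (intro dvd_mult) (simp add: cong_int_iff[symmetric] cong_iff_dvd_diff algebra_simps)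
  hence "2 * int k + 1 dvd (2 * int x) * (int s + 1) - 2" by (simp add: algebra_simps)
  then interpret mod_half k "2 * int x" "int s + 1" by unfold_locales
  show ?thesis
    unfolding det_refl_walks_mat_eq_det_sym_delta_mat \<chi>_def
    using det_sym_delta_mat_odd[OF refl] det_sym_delta_mat_even[OF refl] by simp
qed
section \<open>The non-coprime case\<close>

definition odd_periodic :: "int \<Rightarrow> (int \<Rightarrow> int) \<Rightarrow> bool" where
  "odd_periodic d G \<longleftrightarrow> (\<forall>t. G (-t) = - G t) \<and> (\<forall>t. G (t + d) = G t)"

definition nbr_sum :: "(int \<Rightarrow> int) \<Rightarrow> int \<Rightarrow> int" where
  "nbr_sum G t = G (t + 1) + G (t - 1)"

lemma odd_periodic_nbr_sum: "odd_periodic d G \<Longrightarrow> odd_periodic d (nbr_sum G)"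
  unfolding odd_periodic_def nbr_sum_def
proof (intro conjI allI)
  fix t assume G: "(\<forall>t. G (- t) = - G t) \<and> (\<forall>t. G (t + d) = G t)"
  show "G (- t + 1) + G (- t - 1) = - (G (t + 1) + G (t - 1))"
    using G[THEN conjunct1, rule_format, of "t - 1"] G[THEN conjunct1, rule_format, of "t + 1"] by simp
  show "G (t + d + 1) + G (t + d - 1) = G (t + 1) + G (t - 1)"
    using G[THEN conjunct2, rule_format, of "t + 1"] G[THEN conjunct2, rule_format, of "t - 1"]
    by (simp add: algebra_simps)
qed

lemma odd_periodic_refl_delta: "odd_periodic d (refl_delta d c)"
  unfolding odd_periodic_def by (simp add: refl_delta_uminus) (simp add: refl_delta_def cong_def)

lemma odd_periodic_dvd_eq_0:
  assumes G: "odd_periodic d G" and "d dvd t"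
  shows "G t = 0"
proof -
  have per: "G (t' + int j * d) = G t'" for t' j
  proof (induction j)
    case (Suc j)
    have "G (t' + int (Suc j) * d) = G ((t' + int j * d) + d)" by (simp add: algebra_simps)
    thus ?case using Suc G unfolding odd_periodic_def by simp
  qed simp
  have odd: "G (-t') = - G t'" for t' using G unfolding odd_periodic_def by blast
  have G0: "G 0 = 0" using odd[of 0] by simp
  obtain c where t: "t = d * c" using assms(2) by blast
  show ?thesis
  proof (cases "c \<ge> 0")
    case True
    thus ?thesis using per[of 0 "nat c"] G0 t by (simp add: mult.commute)
  next
    case False
    hence "G (-t) = 0" using per[of 0 "nat (-c)"] G0 t by (simp add: mult.commute)
    thus ?thesis using odd[of t] by simp
  qed
qed

lemma sum_atMost_Suc_shift_int:
  fixes A B :: "int \<Rightarrow> int"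
  assumes "A (int (Suc N)) = 0" "B 0 = 0"
  shows "(\<Sum>t\<le>Suc N. A (int t) * B (int t + 1)) = (\<Sum>t\<le>Suc N. A (int t - 1) * B (int t))"
proof -
  have "(\<Sum>t\<le>Suc N. A (int t - 1) * B (int t)) = (\<Sum>t\<le>N. A (int t) * B (int t + 1))"
    by (subst sum.atMost_Suc_shift) (simp add: assms add.commute)
  thus ?thesis using assms by simp
qed

lemma sum_nbr_sum_adjoint:
  fixes G f :: "int \<Rightarrow> int"
  assumes "G (int (Suc N)) = 0" "G 0 = 0" "f (int (Suc N)) = 0" "f 0 = 0"
  shows "(\<Sum>t\<le>Suc N. G (int t) * nbr_sum f (int t)) = (\<Sum>t\<le>Suc N. nbr_sum G (int t) * f (int t))"
proof -
  have "(\<Sum>t\<le>Suc N. G (int t) * nbr_sum f (int t))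
     = (\<Sum>t\<le>Suc N. G (int t) * f (int t + 1)) + (\<Sum>t\<le>Suc N. f (int t - 1) * G (int t))"
    by (simp add: nbr_sum_def sum.distrib algebra_simps)
  also have "(\<Sum>t\<le>Suc N. G (int t) * f (int t + 1)) = (\<Sum>t\<le>Suc N. G (int t - 1) * f (int t))"
    by (rule sum_atMost_Suc_shift_int) (use assms in auto)
  also have "(\<Sum>t\<le>Suc N. f (int t - 1) * G (int t)) = (\<Sum>t\<le>Suc N. f (int t) * G (int t + 1))"
    by (rule sum_atMost_Suc_shift_int[symmetric]) (use assms in auto)
  finally show ?thesis by (simp add: sum.distrib[symmetric] nbr_sum_def algebra_simps)
qed

lemma odd_periodic_orthogonal_refl_walks:
  assumes G: "odd_periodic d G" and d: "d dvd int Q" "d dvd m" and m: "0 < m" "m < int Q"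
  shows "(\<Sum>t\<le>Q. G (int t) * refl_walks (2 * int Q) m N (int t)) = 0"
  using G
proof (induction N arbitrary: G)
  case 0
  have "(\<Sum>t\<le>Q. G (int t) * refl_walks (2 * int Q) m 0 (int t)) = (\<Sum>t\<le>Q. if t = nat m then G m else 0)"
    using m by (intro sum.cong refl) (auto simp: refl_delta_eq_of_bool)
  also have "\<dots> = 0" using odd_periodic_dvd_eq_0[OF 0 d(2)] by simp
  finally show ?case .
next
  case (Suc N)
  obtain Q' where Q: "Q = Suc Q'" using m by (cases Q) auto
  have "(\<Sum>t\<le>Q. G (int t) * refl_walks (2 * int Q) m (Suc N) (int t))
      = (\<Sum>t\<le>Q. G (int t) * nbr_sum (refl_walks (2 * int Q) m N) (int t))"
    by (simp add: nbr_sum_def)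
  also have "\<dots> = (\<Sum>t\<le>Q. nbr_sum G (int t) * refl_walks (2 * int Q) m N (int t))"
    unfolding Q using odd_periodic_dvd_eq_0[OF Suc.prems] d(1) refl_walks_at_0 refl_walks_at_half
    by (intro sum_nbr_sum_adjoint) (auto simp flip: Q)
  also have "\<dots> = 0" by (rule Suc.IH[OF odd_periodic_nbr_sum[OF Suc.prems]])
  finally show ?case .
qed

lemma refl_walks_eq_0_off_rows:
  fixes k s :: nat
  assumes \<chi>: "\<chi> = (if odd s then 1 else 0)"
    and t: "t \<le> 2 * k + 1" "t \<notin> (\<lambda>i. 2 * i + \<chi> + 1) ` {..<k}"
  shows "refl_walks (2 * (2 * int k + 1)) (int s + 1) (2 * j) (int t) = 0"
proof -
  consider "t = 0" | "t = 2 * k + 1" | "odd (t + s + 1)"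
    | "1 \<le> t" "t \<le> 2 * k" "even (t + s + 1)" using t(1) by linarith
  thus ?thesis
  proof cases
    case 1 thus ?thesis by (simp add: refl_walks_at_0)
  next
    case 2
    hence "int t = 2 * int k + 1" by simp
    thus ?thesis by (simp only:) (rule refl_walks_at_half, simp)
  next
    case 3
    moreover have "int t + int (2 * j) + (int s + 1) = int (t + s + 1 + 2 * j)" by simp
    ultimately show ?thesis by (intro refl_walks_parity) simp_all
  next
    case 4
    hence "\<exists>i<k. t = 2 * i + \<chi> + 1" unfolding \<chi> by presburger
    thus ?thesis using t(2) by auto
  qed
qed

lemma det_refl_walks_mat_non_coprime:
  fixes k s :: nat
  defines "\<chi> \<equiv> (if odd s then 1 else 0 :: nat)"
  assumes k: "1 \<le> k" and s: "s \<le> 2 * k - 1" and gcd: "gcd (s + 1) (2 * k + 1) \<noteq> 1"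
  shows "det (mat k k (\<lambda>(i, j). refl_walks (2 * (2 * int k + 1)) (int s + 1) (2 * j) (int (2 * i + \<chi>) + 1))) = 0"
proof -
  define d where "d = int (gcd (s + 1) (2 * k + 1))"
  define G where "G = refl_delta d (int \<chi> + 1)"
  let ?W = "\<lambda>j. refl_walks (2 * (2 * int k + 1)) (int s + 1) (2 * j)"
  let ?row = "\<lambda>i. 2 * i + \<chi> + 1"
  have dn: "d dvd int (2 * k + 1)" and "d dvd int (s + 1)"
    unfolding d_def int_dvd_int_iff by simp_all
  hence dm: "d dvd int s + 1" by (simp add: add.commute)
  have "odd d" using dn dvd_trans[of 2 d "int (2 * k + 1)"] by auto
  moreover have "d \<noteq> 1" "d > 0" using gcd by (simp_all add: d_def)
  moreover have "\<chi> \<le> 1" by (simp add: \<chi>_def)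
  ultimately have "\<not> d dvd 2 * (int \<chi> + 1)"
  proof (intro notI)
    assume "odd d" "d \<noteq> 1" "d > 0" "\<chi> \<le> 1" and dvd: "d dvd 2 * (int \<chi> + 1)"
    hence "d \<le> 4" using zdvd_imp_le[OF dvd] by simp
    hence "d = 3" using \<open>odd d\<close> \<open>d \<noteq> 1\<close> \<open>d > 0\<close> by presburger
    thus False using dvd \<open>\<chi> \<le> 1\<close> by (cases \<chi>) auto
  qed
  hence G0: "G (int \<chi> + 1) = 1"
    by (simp add: G_def refl_delta_def cong_iff_dvd_diff)
  define v where "v = vec k (\<lambda>i. G (int (?row i)))"
  have "v $ 0 = 1" using k G0 by (simp add: v_def add.commute)
  hence "v \<noteq> 0\<^sub>v k" using k by auto
  moreover have "transpose_mat (mat k k (\<lambda>(i, j). ?W j (int (2 * i + \<chi>) + 1))) *\<^sub>v v = 0\<^sub>v k"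
  proof (rule eq_vecI)
    fix j assume "j < dim_vec (0\<^sub>v k :: int vec)"
    hence j: "j < k" by simp
    have "(transpose_mat (mat k k (\<lambda>(i, j). ?W j (int (2 * i + \<chi>) + 1))) *\<^sub>v v) $ j
        = (\<Sum>t \<in> ?row ` {..<k}. G (int t) * ?W j (int t))"
      using j by (subst sum.reindex) (auto simp: inj_on_def scalar_prod_def v_def
          atLeast0LessThan ac_simps)
    also have "\<dots> = (\<Sum>t\<le>2 * k + 1. G (int t) * ?W j (int t))"
      using refl_walks_eq_0_off_rows[OF \<chi>_def[THEN meta_eq_to_obj_eq]] \<open>\<chi> \<le> 1\<close>
      by (intro sum.mono_neutral_left) (auto simp del: refl_walks.simps)
    also have "\<dots> = 0"
    proof -
      have Q: "int (2 * k + 1) = 2 * int k + 1" by simp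
      have "0 < int s + 1" "int s + 1 < int (2 * k + 1)" using s k by auto
      from odd_periodic_orthogonal_refl_walks[OF odd_periodic_refl_delta dn dm this]
      show ?thesis unfolding Q G_def .
    qed
    finally show "(transpose_mat (mat k k (\<lambda>(i, j). ?W j (int (2 * i + \<chi>) + 1))) *\<^sub>v v) $ j = 0\<^sub>v k $ j"
      using j by simp
  qed simp
  ultimately show ?thesis by (intro det_eq_0_if_left_kernel[of _ k v]) (simp_all add: v_def)
qed

lemma C_mat_eq_refl_walks_mat:
  fixes k s \<chi> :: nat
  assumes "1 \<le> k" "s \<le> 2 * k - 1" "\<chi> \<le> 1"
  shows "mat k k (\<lambda>(i, j). int (C (2 * k - 1) (2 * j) (int (2 * i + \<chi>)) (int s)))
    = mat k k (\<lambda>(i, j). refl_walks (2 * (2 * int k + 1)) (int s + 1) (2 * j) (int (2 * i + \<chi>) + 1))"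
proof -
  have K: "int (2 * k - 1) + 2 = 2 * int k + 1" using assms by simp
  have "int (C (2 * k - 1) (2 * j) (int (2 * i + \<chi>)) (int s))
      = refl_walks (2 * (2 * int k + 1)) (int s + 1) (2 * j) (int (2 * i + \<chi>) + 1)" if "i < k" for i j
    using C_eq_refl_walks[of "int s" "2 * k - 1" "int (2 * i + \<chi>)" "2 * j"] that assms
    unfolding K by simp
  thus ?thesis by (intro eq_matI) auto
qed

theorem proposition58:
  fixes k :: nat and s :: nat
  assumes "k \<ge> 1" and "s \<le> 2 * k - 1"
  defines "\<chi> \<equiv> (if odd s then 1 else 0 :: nat)"
  shows "det (mat k k (\<lambda>(i, j). int (C (2 * k - 1) (2 * j) (int (2 * i + \<chi>)) (int s))))
       = (if gcd (s + 1) (2 * k + 1) \<noteq> 1 then 0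
          else (-1) ^ (\<Sum>i = 1..k. (i * (s + 1)) div (2 * k + 1)))"
proof -
  have M: "mat k k (\<lambda>(i, j). int (C (2 * k - 1) (2 * j) (int (2 * i + \<chi>)) (int s)))
      = mat k k (\<lambda>(i, j). refl_walks (2 * (2 * int k + 1)) (int s + 1) (2 * j) (int (2 * i + \<chi>) + 1))"
    by (rule C_mat_eq_refl_walks_mat) (use assms in auto)
  show ?thesis
  proof (cases "gcd (s + 1) (2 * k + 1) = 1")
    case True
    hence "coprime (s + 1) (2 * k + 1)" by (simp add: coprime_iff_gcd_eq_1)
    thus ?thesis using True det_refl_walks_mat_coprime[of s k] unfolding M by (simp add: \<chi>_def)
  next
    case False
    thus ?thesis using det_refl_walks_mat_non_coprime[OF assms(1,2) False] unfolding M by (simp add: \<chi>_def)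
  qed
qed

end
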